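(* For every quadrilateral $Q$ in $K^2$, the symmetric bilinear form $\langle -,-\rangle_Q$ on $K^2$ is nondegenerate.
   Context: $K$ is a field of characteristic $\neq 2$. Every line $L$ in $K^2$ has an equation $tX-uY+v=0$ normalized so that $t=1$ if $u=0$ and $u=1$ if $u\neq 0$; coefficients denoted $t_L,u_L,v_L$. A quadrilateral $Q=ABA'B'$ consists of four distinct lines $A,B,A',B'$ (sides), not all through one point, with adjacent sides ($A,B$; $B,A'$; $A',B'$; $B',A$) not parallel; opposite sides may be parallel (three sides may be concurrent). Let $\alpha=t_Au_Bu_{A'}u_{B'}-u_At_Bu_{A'}u_{B'}+u_Au_Bt_{A'}u_{B'}-u_Au_Bu_{A'}t_{B'}$, $\beta=t_Au_Bt_{A'}u_{B'}-u_At_Bu_{A'}t_{B'}$, $\gamma=t_At_Bt_{A'}u_{B'}-t_At_Bu_{A'}t_{B'}+t_Au_Bt_{A'}t_{B'}-u_At_Bt_{A'}t_{B'}$, and $\langle \mathbf v,\mathbf w\rangle_Q=\mathbf v^T\begin{pmatrix}\gamma&-\beta\\-\beta&\alpha\end{pmatrix}\mathbf w$ for $\mathbf v,\mathbf w\in K^2$. *)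

theory Defs
  imports Main
begin

text \<open>A line in K^2 is represented by its normalized coefficient triple (t, u, v) of the
equation t X - u Y + v = 0, normalized so that t = 1 if u = 0 and u = 1 if u is nonzero.\<close>

type_synonym 'a line = "'a \<times> 'a \<times> 'a"

definition t_L :: "'a line \<Rightarrow> 'a" where "t_L L = fst L"
definition u_L :: "'a line \<Rightarrow> 'a" where "u_L L = fst (snd L)"
definition v_L :: "'a line \<Rightarrow> 'a" where "v_L L = snd (snd L)"

definition is_line :: "'a::field line \<Rightarrow> bool" where
  "is_line L \<longleftrightarrow> (u_L L = 0 \<and> t_L L = 1) \<or> u_L L = 1"

definition on_line :: "'a::field \<times> 'a \<Rightarrow> 'a line \<Rightarrow> bool" where
  "on_line p L \<longleftrightarrow> t_L L * fst p - u_L L * snd p + v_L L = 0"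

definition parallel :: "'a::field line \<Rightarrow> 'a line \<Rightarrow> bool" where
  "parallel L M \<longleftrightarrow> t_L L * u_L M - u_L L * t_L M = 0"

definition quadrilateral :: "'a::field line \<Rightarrow> 'a line \<Rightarrow> 'a line \<Rightarrow> 'a line \<Rightarrow> bool" where
  "quadrilateral A B A' B' \<longleftrightarrow>
     is_line A \<and> is_line B \<and> is_line A' \<and> is_line B' \<and>
     distinct [A, B, A', B'] \<and>
     \<not> (\<exists>p. on_line p A \<and> on_line p B \<and> on_line p A' \<and> on_line p B') \<and>
     \<not> parallel A B \<and> \<not> parallel B A' \<and> \<not> parallel A' B' \<and> \<not> parallel B' A"

definition q_alpha :: "'a::field line \<Rightarrow> 'a line \<Rightarrow> 'a line \<Rightarrow> 'a line \<Rightarrow> 'a" where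
  "q_alpha A B A' B' =
     t_L A * u_L B * u_L A' * u_L B' - u_L A * t_L B * u_L A' * u_L B'
   + u_L A * u_L B * t_L A' * u_L B' - u_L A * u_L B * u_L A' * t_L B'"

definition q_beta :: "'a::field line \<Rightarrow> 'a line \<Rightarrow> 'a line \<Rightarrow> 'a line \<Rightarrow> 'a" where
  "q_beta A B A' B' =
     t_L A * u_L B * t_L A' * u_L B' - u_L A * t_L B * u_L A' * t_L B'"

definition q_gamma :: "'a::field line \<Rightarrow> 'a line \<Rightarrow> 'a line \<Rightarrow> 'a line \<Rightarrow> 'a" where
  "q_gamma A B A' B' =
     t_L A * t_L B * t_L A' * u_L B' - t_L A * t_L B * u_L A' * t_L B'
   + t_L A * u_L B * t_L A' * t_L B' - u_L A * t_L B * t_L A' * t_L B'"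

definition qform :: "'a::field line \<Rightarrow> 'a line \<Rightarrow> 'a line \<Rightarrow> 'a line \<Rightarrow> 'a \<times> 'a \<Rightarrow> 'a \<times> 'a \<Rightarrow> 'a" where
  "qform A B A' B' v w =
     (let \<alpha> = q_alpha A B A' B'; \<beta> = q_beta A B A' B'; \<gamma> = q_gamma A B A' B' in
      fst v * (\<gamma> * fst w - \<beta> * snd w) + snd v * (- \<beta> * fst w + \<alpha> * snd w))"

definition nondegenerate :: "('a::field \<times> 'a \<Rightarrow> 'a \<times> 'a \<Rightarrow> 'a) \<Rightarrow> bool" where
  "nondegenerate f \<longleftrightarrow> (\<forall>v. (\<forall>w. f v w = 0) \<longrightarrow> v = (0, 0))"

end

theory Submission
  imports Defs
begin

text \<open>The Gram determinant \<open>\<alpha>\<gamma> - \<beta>\<^sup>2\<close> of \<open>\<langle>-,-\<rangle>\<^sub>Q\<close> factors, up to sign, into the four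
  determinants \<open>t\<^sub>L u\<^sub>M - u\<^sub>L t\<^sub>M\<close> of adjacent sides, which vanish exactly when adjacent sides are
  parallel. Since a quadrilateral has no parallel adjacent sides, the Gram matrix is invertible.\<close>

definition line_cross :: "'a::field line \<Rightarrow> 'a line \<Rightarrow> 'a" where
  "line_cross L M = t_L L * u_L M - u_L L * t_L M"

lemma parallel_iff_line_cross: "parallel L M \<longleftrightarrow> line_cross L M = 0"
  by (simp add: parallel_def line_cross_def)

lemma nondegenerate_symmetric_2x2:
  fixes \<alpha> \<beta> \<gamma> :: "'a::field"
  assumes det: "\<alpha> * \<gamma> - \<beta>\<^sup>2 \<noteq> 0"
  shows "nondegenerate (\<lambda>v w. fst v * (\<gamma> * fst w - \<beta> * snd w) + snd v * (- \<beta> * fst w + \<alpha> * snd w))"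
  unfolding nondegenerate_def
proof (intro allI impI)
  fix v :: "'a \<times> 'a"
  obtain x y where v: "v = (x, y)" by fastforce
  assume "\<forall>w. fst v * (\<gamma> * fst w - \<beta> * snd w) + snd v * (- \<beta> * fst w + \<alpha> * snd w) = 0"
  from this[rule_format, of "(1, 0)"] this[rule_format, of "(0, 1)"]
  have row1: "\<gamma> * x - \<beta> * y = 0" and row2: "\<alpha> * y - \<beta> * x = 0"
    by (simp_all add: v algebra_simps)
  have "(\<alpha> * \<gamma> - \<beta>\<^sup>2) * x = \<alpha> * (\<gamma> * x - \<beta> * y) + \<beta> * (\<alpha> * y - \<beta> * x)"
    by (simp add: algebra_simps power2_eq_square)
  with row1 row2 det have "x = 0"
    by simp
  have "(\<alpha> * \<gamma> - \<beta>\<^sup>2) * y = \<gamma> * (\<alpha> * y - \<beta> * x) + \<beta> * (\<gamma> * x - \<beta> * y)"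
    by (simp add: algebra_simps power2_eq_square)
  with row1 row2 det have "y = 0"
    by simp
  show "v = (0, 0)"
    using \<open>x = 0\<close> \<open>y = 0\<close> by (simp add: v)
qed

lemma q_gram_det:
  "q_alpha A B A' B' * q_gamma A B A' B' - (q_beta A B A' B')\<^sup>2 =
     - (line_cross A B * line_cross B A' * line_cross A' B' * line_cross B' A)"
  unfolding q_alpha_def q_beta_def q_gamma_def line_cross_def by algebra

theorem lemma2p2:
  fixes A B A' B' :: "'a::field line"
  assumes char: "(2::'a) \<noteq> 0"
    and Q: "quadrilateral A B A' B'"
  shows "nondegenerate (qform A B A' B')"
proof -
  have "\<not> parallel A B" "\<not> parallel B A'" "\<not> parallel A' B'" "\<not> parallel B' A"
    using Q by (simp_all add: quadrilateral_def)
  then have "q_alpha A B A' B' * q_gamma A B A' B' - (q_beta A B A' B')\<^sup>2 \<noteq> 0"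
    by (simp add: q_gram_det parallel_iff_line_cross)
  then show ?thesis
    unfolding qform_def[abs_def] Let_def by (rule nondegenerate_symmetric_2x2)
qed

end
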